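(* The inhomogeneous domain wall boundary partition function $Z_N(\{u\}_N|\{w\}_N)$ satisfies: (1) it is a polynomial in $w_N$ of degree at most $N-1$; (2) it is symmetric in $u_1,\dots,u_N$; (3) $Z_1(u_1|w_1)=(1-t)cu_1$; (4) for $N\ge2$ and each $k\in\{1,\dots,N\}$, \[Z_N(\{u\}_N|\{w\}_N)\big|_{w_N=-au_k/b}=(1-t)ca^{N-1}u_k\prod_{j\neq k}(tu_j-u_k)\prod_{j=1}^{N-1}(eu_k+fw_j)\,Z_{N-1}(u_1,\dots,\widehat{u_k},\dots,u_N|w_1,\dots,w_{N-1}),\] where $\widehat{u_k}$ means $u_k$ is omitted.
   Context: Fix complex parameters $t,a,b,c,d,e,f$, all nonzero, with $t\neq1$, satisfying $cd+af=0$ and $tcd+be=0$. The inhomogeneous $L$-operator $L_{aj}(u,w)$ on $W_a\otimes V_j$ ($\cong\mathbb{C}^2\otimes\mathbb{C}^2$, basis $|0\rangle,|1\rangle$) has matrix elements ${}_a\langle\gamma|{}_j\langle\delta|L_{aj}(u,w)|\alpha\rangle_a|\beta\rangle_j=[L(u,w)]^{\gamma\delta}_{\alpha\beta}$: $[L]^{00}_{00}=au+bw$, $[L]^{01}_{01}=atu+bw$, $[L]^{01}_{10}=(1-t)cu$, $[L]^{10}_{01}=(1-t)dw$, $[L]^{10}_{10}=eu+fw$, $[L]^{11}_{11}=eu+tfw$, all others $0$. Define $B_N(u|\{w\}_N)={}_a\langle0|L_{aN}(u,w_N)\cdots L_{a1}(u,w_1)|1\rangle_a$ on $V_1\otimes\cdots\otimes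 V_N$ and $Z_N(\{u\}_N|\{w\}_N)=\langle1\cdots N|B_N(u_1|\{w\}_N)\cdots B_N(u_N|\{w\}_N)|\Omega\rangle$ with $|\Omega\rangle=|0\rangle^{\otimes N}$, $\langle1\cdots N|=\langle1|^{\otimes N}$. *)

theory Defs
  imports Complex_Main "HOL-Computational_Algebra.Polynomial"
begin

text \<open>Basis convention: False = |0>, True = |1>.
  Lel prm u w g d al be is the matrix element [L(u,w)]^{g d}_{al be}, where the
  parameter tuple is prm = (t,a,b,c,d,e,f).\<close>

type_synonym params = "complex \<times> complex \<times> complex \<times> complex \<times> complex \<times> complex \<times> complex"

fun Lel :: "params \<Rightarrow> complex \<Rightarrow> complex \<Rightarrow> bool \<Rightarrow> bool \<Rightarrow> bool \<Rightarrow> bool \<Rightarrow> complex" where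
  "Lel (t,a,b,c,d,e,f) u w g dl al be =
    (if \<not>g \<and> \<not>dl \<and> \<not>al \<and> \<not>be then a*u + b*w
     else if \<not>g \<and> dl \<and> \<not>al \<and> be then a*t*u + b*w
     else if \<not>g \<and> dl \<and> al \<and> \<not>be then (1-t)*c*u
     else if g \<and> \<not>dl \<and> \<not>al \<and> be then (1-t)*d*w
     else if g \<and> \<not>dl \<and> al \<and> \<not>be then e*u + f*w
     else if g \<and> dl \<and> al \<and> be then e*u + t*f*w
     else 0)"

text \<open>Matrix element
  <gam|_a <ds| L_{a n}(u,w_n) ... L_{a 1}(u,w_1) |al>_a |bs>,
  where the list ws = [w_1,...,w_n] and ds, bs list the quantum-space
  states of sites 1..n in order.\<close>
fun Mono :: "params \<Rightarrow> complex \<Rightarrow> complex list \<Rightarrow> bool list \<Rightarrow> bool list \<Rightarrow> bool \<Rightarrow> bool \<Rightarrow> complex" where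
  "Mono p u [] [] [] al gam = (if al = gam then 1 else 0)"
| "Mono p u (w#ws) (dl#ds) (be#bs) al gam =
     (\<Sum>g\<in>UNIV. Lel p u w g dl al be * Mono p u ws ds bs g gam)"
| "Mono p u _ _ _ al gam = 0"

text \<open>Matrix element <ds| B_N(u|ws) |bs> with B_N = <0|_a T |1>_a.\<close>
definition Bel :: "params \<Rightarrow> complex \<Rightarrow> complex list \<Rightarrow> bool list \<Rightarrow> bool list \<Rightarrow> complex" where
  "Bel p u ws ds bs = Mono p u ws ds bs True False"

text \<open>Action of B_N(u|ws) on a vector of V_1 (x) ... (x) V_N, vectors being
  coefficient functions on basis configurations (bool lists of length N).\<close>
definition applyB :: "params \<Rightarrow> complex list \<Rightarrow> complex \<Rightarrow> (bool list \<Rightarrow> complex) \<Rightarrow> (bool list \<Rightarrow> complex)" where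
  "applyB p ws u v = (\<lambda>ds. \<Sum>bs\<in>{xs. length xs = length ws}. Bel p u ws ds bs * v bs)"

definition Omega :: "nat \<Rightarrow> bool list \<Rightarrow> complex" where
  "Omega n = (\<lambda>bs. if bs = replicate n False then 1 else 0)"

text \<open>Z_N(us|ws) = <1...N| B_N(u_1|ws) ... B_N(u_N|ws) |Omega>.\<close>
definition Z :: "params \<Rightarrow> complex list \<Rightarrow> complex list \<Rightarrow> complex" where
  "Z p us ws = foldr (applyB p ws) us (Omega (length ws)) (replicate (length ws) True)"

end

theory Submission
  imports Defs "HOL-Library.Multiset"
begin

text \<open>The B-operators commute: the RLL relation lifts site by site to an RTT relation whose
  entry between the auxiliary states (0,0) and (1,1) reads \<open>(u - t v) (B(u) B(v) - B(v) B(u)) = 0\<close>,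
  so Z is symmetric. Only the last site depends on \<open>w\<^sub>N\<close>, linearly; since that site starts empty
  and ends occupied, and is switched on by the \<open>w\<^sub>N\<close>-independent weight \<open>(1-t) c u\<close>, the degree is
  at most \<open>N - 1\<close>. At \<open>w\<^sub>N = -a u\<^sub>k/b\<close> the weight \<open>a u\<^sub>k + b w\<^sub>N\<close> of an empty last site vanishes, so
  (after moving \<open>u\<^sub>k\<close> to the end by symmetry) \<open>B(u\<^sub>k)\<close> must occupy the last site, and all other
  B-operators then cross it with weight \<open>a t u\<^sub>j + b w\<^sub>N = a (t u\<^sub>j - u\<^sub>k)\<close>.\<close>

section \<open>Site-by-site expansion of the monodromy\<close>

lemma Mono_eq_0_if_length_neq:
  "length ds \<noteq> length ws \<or> length bs \<noteq> length ws \<Longrightarrow> Mono p u ws ds bs al gam = 0"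
  by (induction p u ws ds bs al gam rule: Mono.induct) auto

lemma finite_lists_length: "finite {xs :: 'a::finite list. length xs = n}"
  using finite_lists_length_eq[of "UNIV :: 'a set" n] by simp

lemma sum_lists_length_Suc:
  fixes F :: "'a::finite list \<Rightarrow> 'b::comm_monoid_add"
  shows "(\<Sum>xs\<in>{xs. length xs = Suc n}. F xs) = (\<Sum>x\<in>UNIV. \<Sum>xs\<in>{xs. length xs = n}. F (x # xs))"
proof -
  have "{xs::'a list. length xs = Suc n} = (\<lambda>(x, xs). x # xs) ` (UNIV \<times> {xs. length xs = n})"
    by (auto simp: image_def length_Suc_conv)
  moreover have "inj_on (\<lambda>(x, xs). x # xs) (UNIV \<times> {xs::'a list. length xs = n})"
    by (auto simp: inj_on_def)
  ultimately show ?thesis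
    by (simp add: sum.reindex sum.cartesian_product split_def)
qed

lemma sum_lists_length_Suc_snoc:
  fixes F :: "'a::finite list \<Rightarrow> 'b::comm_monoid_add"
  shows "(\<Sum>xs\<in>{xs. length xs = Suc n}. F xs) = (\<Sum>xs\<in>{xs. length xs = n}. \<Sum>x\<in>UNIV. F (xs @ [x]))"
proof -
  have "{xs::'a list. length xs = Suc n} = (\<lambda>(xs, x). xs @ [x]) ` ({xs. length xs = n} \<times> UNIV)"
    by (auto simp: image_def) (metis length_Suc_conv_rev)
  moreover have "inj_on (\<lambda>(xs, x). xs @ [x]) ({xs::'a list. length xs = n} \<times> UNIV)"
    by (auto simp: inj_on_def)
  ultimately show ?thesis
    by (simp add: sum.reindex sum.cartesian_product split_def)
qed

lemma Mono_snoc: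
  assumes "length ds = length ws" "length bs = length ws"
  shows "Mono p u (ws @ [w]) (ds @ [q]) (bs @ [m]) al gam
           = (\<Sum>g\<in>UNIV. Mono p u ws ds bs al g * Lel p u w gam q g m)"
proof -
  have "length ws = length bs" "length bs = length ds"
    using assms by simp_all
  then show ?thesis
  proof (induction ws bs ds arbitrary: al rule: list_induct3)
    case Nil
    then show ?case by (simp add: UNIV_bool)
  next
    case (Cons w ws b bs q ds)
    then show ?case
      by (simp add: sum_distrib_left sum_distrib_right mult.assoc) (rule sum.swap)
  qed
qed

lemma Bel_snoc_False:
  "Bel (t,a,b,c,d,e,f) u (ws @ [w]) (ds @ [q]) (bs @ [False])
     = (if q then (1-t)*c*u * Mono (t,a,b,c,d,e,f) u ws ds bs True True
        else (a*u + b*w) * Bel (t,a,b,c,d,e,f) u ws ds bs)"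
  by (cases "length ds = length ws \<and> length bs = length ws")
     (auto simp: Bel_def Mono_snoc UNIV_bool Mono_eq_0_if_length_neq)

lemma Bel_snoc_True:
  "Bel (t,a,b,c,d,e,f) u (ws @ [w]) (ds @ [q]) (bs @ [True])
     = (if q then (a*t*u + b*w) * Bel (t,a,b,c,d,e,f) u ws ds bs else 0)"
  by (cases "length ds = length ws \<and> length bs = length ws")
     (auto simp: Bel_def Mono_snoc UNIV_bool Mono_eq_0_if_length_neq)

section \<open>Commutation of the B-operators\<close>

lemma sum_mult_sum_swap:
  fixes A :: "'a \<Rightarrow> 'c::comm_semiring_0"
  shows "(\<Sum>x\<in>X. A x * (\<Sum>y\<in>Y. B x y * C y)) = (\<Sum>y\<in>Y. (\<Sum>x\<in>X. A x * B x y) * C y)"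
  by (simp add: sum_distrib_left sum_distrib_right mult.assoc) (rule sum.swap)

lemma UNIV_bool_pair: "(UNIV :: (bool \<times> bool) set) = {(False,False), (False,True), (True,False), (True,True)}"
  by auto

lemma sum_UNIV_bool_pair_swap: "(\<Sum>g\<in>UNIV. F g) = (\<Sum>g\<in>UNIV. F (prod.swap g))"
  for F :: "bool \<times> bool \<Rightarrow> 'a::comm_monoid_add"
  by (simp add: UNIV_bool_pair add_ac)

text \<open>\<open>LL\<close> and \<open>TT\<close> are the matrix elements of \<open>L\<^sub>a(u,w) L\<^sub>b(v,w)\<close> and \<open>T\<^sub>a(u) T\<^sub>b(v)\<close>;
  auxiliary indices are pairs (state in a, state in b), the first one outgoing and the second
  incoming.\<close>

definition Rmat :: "complex \<Rightarrow> complex \<Rightarrow> complex \<Rightarrow> bool \<times> bool \<Rightarrow> bool \<times> bool \<Rightarrow> complex" where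
  "Rmat t u v g h =
     (if g = h \<and> fst g = snd g then u - t*v
      else if g = (False,True) \<and> h = (False,True) then t*(u - v)
      else if g = (False,True) \<and> h = (True,False) then (1-t)*u
      else if g = (True,False) \<and> h = (False,True) then (1-t)*v
      else if g = (True,False) \<and> h = (True,False) then u - v
      else 0)"

definition LL :: "params \<Rightarrow> complex \<Rightarrow> complex \<Rightarrow> complex \<Rightarrow> bool \<Rightarrow> bool \<Rightarrow> bool \<times> bool \<Rightarrow> bool \<times> bool \<Rightarrow> complex" where
  "LL p u v w q r g h = (\<Sum>m\<in>UNIV. Lel p u w (fst g) q (fst h) m * Lel p v w (snd g) m (snd h) r)"

definition TT :: "params \<Rightarrow> complex \<Rightarrow> complex \<Rightarrow> complex list \<Rightarrow> bool list \<Rightarrow> bool list \<Rightarrow> bool \<times> bool \<Rightarrow> bool \<times> bool \<Rightarrow> complex" where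
  "TT p u v ws ds cs g h = (\<Sum>bs\<in>{bs. length bs = length ws}.
      Mono p u ws ds bs (fst h) (fst g) * Mono p v ws bs cs (snd h) (snd g))"

lemma RLL_relation:
  assumes "c*d + a*f = 0" "t*c*d + b*e = 0"
  shows "(\<Sum>k\<in>UNIV. Rmat t u v g k * LL (t,a,b,c,d,e,f) u v w q r k h)
       = (\<Sum>k\<in>UNIV. LL (t,a,b,c,d,e,f) v u w q r (prod.swap g) (prod.swap k) * Rmat t u v k h)"
proof -
  have "a*f = -(c*d)" "b*e = -(t*c*d)"
    using assms by (simp_all add: eq_neg_iff_add_eq_0 add.commute)
  then have af: "a*(f*x) = -(c*(d*x))" and be: "b*(e*x) = -(t*(c*(d*x)))" for x
    by (simp_all add: mult.assoc[symmetric])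
  obtain g1 g2 h1 h2 where "g = (g1, g2)" "h = (h1, h2)" by fastforce
  then show ?thesis
    by (cases g1; cases g2; cases h1; cases h2; cases q; cases r)
       (simp_all add: UNIV_bool_pair UNIV_bool LL_def Rmat_def algebra_simps af be)
qed

lemma TT_Cons:
  "TT p u v (w # ws) (q # ds) (r # cs) g h = (\<Sum>k\<in>UNIV. TT p u v ws ds cs g k * LL p u v w q r k h)"
  unfolding TT_def LL_def
  by (simp add: sum_lists_length_Suc UNIV_bool UNIV_bool_pair sum.distrib sum_distrib_left
      sum_distrib_right algebra_simps)

lemma TT_eq_0_if_length_neq:
  "length ds \<noteq> length ws \<or> length cs \<noteq> length ws \<Longrightarrow> TT p u v ws ds cs g h = 0"
  by (auto simp: TT_def Mono_eq_0_if_length_neq intro!: sum.neutral)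

lemma RTT_relation:
  assumes "c*d + a*f = 0" "t*c*d + b*e = 0"
  shows "(\<Sum>k\<in>UNIV. Rmat t u v g k * TT (t,a,b,c,d,e,f) u v ws ds cs k h)
       = (\<Sum>k\<in>UNIV. TT (t,a,b,c,d,e,f) v u ws ds cs (prod.swap g) (prod.swap k) * Rmat t u v k h)"
proof (cases "length ws = length ds \<and> length ds = length cs")
  case False
  then show ?thesis by (auto simp: TT_eq_0_if_length_neq)
next
  case True
  let ?p = "(t,a,b,c,d,e,f)"
  from True have "length ws = length ds" "length ds = length cs"
    by simp_all
  then show ?thesis
  proof (induction ws ds cs arbitrary: g h rule: list_induct3)
    case Nil
    obtain g1 g2 h1 h2 where "g = (g1, g2)" "h = (h1, h2)" by fastforce
    then show ?case
      by (cases g1; cases g2; cases h1; cases h2) (simp_all add: TT_def UNIV_bool_pair Rmat_def)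
  next
    case (Cons w ws q ds r cs)
    have "(\<Sum>k\<in>UNIV. Rmat t u v g k * TT ?p u v (w # ws) (q # ds) (r # cs) k h)
        = (\<Sum>l\<in>UNIV. (\<Sum>k\<in>UNIV. Rmat t u v g k * TT ?p u v ws ds cs k l) * LL ?p u v w q r l h)"
      unfolding TT_Cons by (rule sum_mult_sum_swap)
    also have "\<dots> = (\<Sum>l\<in>UNIV. (\<Sum>k\<in>UNIV. TT ?p v u ws ds cs (prod.swap g) (prod.swap k) * Rmat t u v k l)
                        * LL ?p u v w q r l h)"
      by (simp add: Cons.IH)
    also have "\<dots> = (\<Sum>k\<in>UNIV. TT ?p v u ws ds cs (prod.swap g) (prod.swap k)
                        * (\<Sum>l\<in>UNIV. Rmat t u v k l * LL ?p u v w q r l h))"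
      by (rule sum_mult_sum_swap[symmetric])
    also have "\<dots> = (\<Sum>k\<in>UNIV. TT ?p v u ws ds cs (prod.swap g) (prod.swap k)
                        * (\<Sum>l\<in>UNIV. LL ?p v u w q r (prod.swap k) (prod.swap l) * Rmat t u v l h))"
      by (simp add: RLL_relation[OF assms])
    also have "\<dots> = (\<Sum>l\<in>UNIV. (\<Sum>k\<in>UNIV. TT ?p v u ws ds cs (prod.swap g) (prod.swap k)
                        * LL ?p v u w q r (prod.swap k) (prod.swap l)) * Rmat t u v l h)"
      by (rule sum_mult_sum_swap)
    also have "\<dots> = (\<Sum>l\<in>UNIV. TT ?p v u (w # ws) (q # ds) (r # cs) (prod.swap g) (prod.swap l) * Rmat t u v l h)"
      by (simp add: TT_Cons sum_UNIV_bool_pair_swap[where F = "\<lambda>k. TT ?p v u ws ds cs (prod.swap g) k * _ k"])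
    finally show ?case .
  qed
qed

lemma isCont_Mono: "isCont (\<lambda>u. Mono p u ws ds bs al gam) z"
proof -
  obtain t a b c d e f where p: "p = (t,a,b,c,d,e,f)" by (cases p)
  have "isCont (\<lambda>u. Lel p u w g q h m) z" for w g q h m
    unfolding p by (cases g; cases q; cases h; cases m) (auto intro!: continuous_intros)
  then show ?thesis
  proof (induction ws arbitrary: ds bs al)
    case Nil
    then show ?case by (cases ds; cases bs) auto
  next
    case (Cons w ws)
    then show ?case by (cases ds; cases bs) (auto intro!: continuous_intros)
  qed
qed

lemma isCont_eq_const_if_punctured:
  fixes h :: "'a::{perfect_space, metric_space} \<Rightarrow> 'b::t2_space"
  assumes "isCont h z" "\<And>u. u \<noteq> z \<Longrightarrow> h u = c"
  shows "h z = c"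
  by (metis (no_types, lifting) LIM_cong LIM_unique assms continuous_within tendsto_const)

text \<open>Continuity in \<open>u\<close> removes the factor \<open>u - t v\<close> left by the RTT relation.\<close>

lemma Bel_Bel_commute:
  assumes "c*d + a*f = 0" "t*c*d + b*e = 0"
  shows "(\<Sum>bs\<in>{bs. length bs = length ws}. Bel (t,a,b,c,d,e,f) u ws ds bs * Bel (t,a,b,c,d,e,f) v ws bs cs)
       = (\<Sum>bs\<in>{bs. length bs = length ws}. Bel (t,a,b,c,d,e,f) v ws ds bs * Bel (t,a,b,c,d,e,f) u ws bs cs)"
proof -
  let ?BB = "\<lambda>u v. \<Sum>bs\<in>{bs. length bs = length ws}. Bel (t,a,b,c,d,e,f) u ws ds bs * Bel (t,a,b,c,d,e,f) v ws bs cs"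
  have "TT (t,a,b,c,d,e,f) x y ws ds cs (False,False) (True,True) = ?BB x y" for x y
    by (simp add: TT_def Bel_def)
  then have scaled: "(x - t*v) * ?BB x v = (x - t*v) * ?BB v x" for x
    using RTT_relation[OF assms, of x v "(False,False)" ws ds cs "(True,True)"]
    by (simp add: UNIV_bool_pair Rmat_def)
  have "isCont (\<lambda>x. ?BB x v - ?BB v x) (t*v)"
    by (auto simp: Bel_def intro!: continuous_intros isCont_Mono)
  then have "?BB (t*v) v - ?BB v (t*v) = 0"
    by (rule isCont_eq_const_if_punctured) (use scaled in auto)
  then show ?thesis
    using scaled[of u] by (cases "u = t*v") auto
qed

lemma applyB_commute:
  assumes "c*d + a*f = 0" "t*c*d + b*e = 0"
  shows "applyB (t,a,b,c,d,e,f) ws u \<circ> applyB (t,a,b,c,d,e,f) ws v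
       = applyB (t,a,b,c,d,e,f) ws v \<circ> applyB (t,a,b,c,d,e,f) ws u"
proof (intro ext)
  fix X ds
  have "applyB (t,a,b,c,d,e,f) ws x (applyB (t,a,b,c,d,e,f) ws y X) ds
      = (\<Sum>cs\<in>{cs. length cs = length ws}. (\<Sum>bs\<in>{bs. length bs = length ws}.
           Bel (t,a,b,c,d,e,f) x ws ds bs * Bel (t,a,b,c,d,e,f) y ws bs cs) * X cs)" for x y
    unfolding applyB_def by (rule sum_mult_sum_swap)
  then show "(applyB (t,a,b,c,d,e,f) ws u \<circ> applyB (t,a,b,c,d,e,f) ws v) X ds
           = (applyB (t,a,b,c,d,e,f) ws v \<circ> applyB (t,a,b,c,d,e,f) ws u) X ds"
    by (simp add: Bel_Bel_commute[OF assms])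
qed

lemma Z_mset_eq:
  assumes "c*d + a*f = 0" "t*c*d + b*e = 0" "mset vs = mset us"
  shows "Z (t,a,b,c,d,e,f) vs ws = Z (t,a,b,c,d,e,f) us ws"
  unfolding Z_def foldr_conv_fold
  by (subst fold_multiset_equiv[of "rev vs" _ "rev us"]) (use assms applyB_commute in auto)

section \<open>Polynomiality in the last inhomogeneity\<close>

definition poly_fun_degree_le :: "nat \<Rightarrow> ('a::comm_ring_1 \<Rightarrow> 'a) \<Rightarrow> bool" where
  "poly_fun_degree_le k F \<longleftrightarrow> (\<exists>q. degree q \<le> k \<and> (\<forall>x. F x = poly q x))"

lemma poly_fun_degree_le_const: "poly_fun_degree_le k (\<lambda>x. c)"
  unfolding poly_fun_degree_le_def by (rule exI[of _ "[:c:]"]) simp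

lemma poly_fun_degree_le_linear: "poly_fun_degree_le 1 (\<lambda>x. \<alpha> + \<beta> * x)"
  unfolding poly_fun_degree_le_def by (rule exI[of _ "[:\<alpha>, \<beta>:]"]) (simp add: degree_pCons_le)

lemma poly_fun_degree_le_add:
  "poly_fun_degree_le k F \<Longrightarrow> poly_fun_degree_le k G \<Longrightarrow> poly_fun_degree_le k (\<lambda>x. F x + G x)"
  unfolding poly_fun_degree_le_def by (metis degree_add_le poly_add)

lemma poly_fun_degree_le_mult:
  assumes "poly_fun_degree_le i F" "poly_fun_degree_le j G" "i + j \<le> k"
  shows "poly_fun_degree_le k (\<lambda>x. F x * G x)"
  using assms unfolding poly_fun_degree_le_def
  by (metis add_mono degree_mult_le order_trans poly_mult)

lemma poly_fun_degree_le_cmult: "poly_fun_degree_le k F \<Longrightarrow> poly_fun_degree_le k (\<lambda>x. c * F x)"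
  unfolding poly_fun_degree_le_def by (metis degree_smult_le order_trans poly_smult)

lemma poly_fun_degree_le_sum:
  "finite A \<Longrightarrow> (\<And>a. a \<in> A \<Longrightarrow> poly_fun_degree_le k (F a)) \<Longrightarrow> poly_fun_degree_le k (\<lambda>x. \<Sum>a\<in>A. F a x)"
  by (induction A rule: finite_induct) (simp_all add: poly_fun_degree_le_const poly_fun_degree_le_add)

lemma Omega_snoc_True: "Omega n (ds @ [True]) = 0"
proof -
  have "ds @ [True] \<noteq> replicate n False"
    by (metis in_set_conv_decomp in_set_replicate)
  then show ?thesis by (simp add: Omega_def)
qed

lemma poly_fun_foldr_applyB_snoc:
  fixes ws :: "complex list"
  defines "V \<equiv> \<lambda>p us w. foldr (applyB p (ws @ [w])) us (Omega (Suc (length ws)))"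
  shows "poly_fun_degree_le (length us) (\<lambda>w. V (t,a,b,c,d,e,f) us w (ds @ [False]))
       \<and> poly_fun_degree_le (length us - 1) (\<lambda>w. V (t,a,b,c,d,e,f) us w (ds @ [True]))"
proof (induction us arbitrary: ds)
  case Nil
  show ?case by (simp add: V_def Omega_snoc_True poly_fun_degree_le_const)
next
  case (Cons u us)
  let ?p = "(t,a,b,c,d,e,f)"
  have expand: "V ?p (u # us) w (ds @ [q]) = (\<Sum>bs\<in>{bs. length bs = length ws}.
      Bel ?p u (ws @ [w]) (ds @ [q]) (bs @ [False]) * V ?p us w (bs @ [False])
      + Bel ?p u (ws @ [w]) (ds @ [q]) (bs @ [True]) * V ?p us w (bs @ [True]))" for w q
    by (simp add: V_def applyB_def sum_lists_length_Suc_snoc UNIV_bool)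
  have "poly_fun_degree_le (Suc (length us)) (\<lambda>w. (a*u + b*w) * (Bel ?p u ws ds bs * V ?p us w (bs @ [False])))"
    for bs
    using poly_fun_degree_le_linear poly_fun_degree_le_cmult[OF Cons.IH[THEN conjunct1]]
    by (rule poly_fun_degree_le_mult) simp
  then have F: "poly_fun_degree_le (length (u # us)) (\<lambda>w. V ?p (u # us) w (ds @ [False]))"
    unfolding expand Bel_snoc_False Bel_snoc_True
    by (auto simp: mult.assoc intro!: poly_fun_degree_le_sum finite_lists_length)
  have "poly_fun_degree_le (length us) (\<lambda>w. (a*t*u + b*w) * (Bel ?p u ws ds bs * V ?p us w (bs @ [True])))"
    for bs
  proof (cases "us = []")
    case True
    then show ?thesis by (simp add: V_def Omega_snoc_True poly_fun_degree_le_const)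
  next
    case False
    then have "1 + (length us - 1) \<le> length us" by simp
    with poly_fun_degree_le_linear poly_fun_degree_le_cmult[OF Cons.IH[THEN conjunct2]]
    show ?thesis by (rule poly_fun_degree_le_mult)
  qed
  then have T: "poly_fun_degree_le (length (u # us) - 1) (\<lambda>w. V ?p (u # us) w (ds @ [True]))"
    unfolding expand Bel_snoc_False Bel_snoc_True
    by (auto simp: mult.assoc intro!: poly_fun_degree_le_sum finite_lists_length poly_fun_degree_le_add
        poly_fun_degree_le_cmult Cons.IH[THEN conjunct1])
  from F T show ?case ..
qed

lemma Z_poly_fun_last:
  assumes "length us = N" "length ws = N" "N \<ge> 1"
  shows "poly_fun_degree_le (N - 1) (\<lambda>x. Z (t,a,b,c,d,e,f) us (ws[N-1 := x]))"
proof -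
  obtain ws0 w where ws: "ws = ws0 @ [w]"
    using assms by (metis le_numeral_extra(2) length_0_conv rev_exhaust)
  with assms have N: "N = Suc (length ws0)" by simp
  have "ws[N-1 := x] = ws0 @ [x]" for x
    by (simp add: ws N list_update_length)
  moreover have "replicate N True = replicate (length ws0) True @ [True]"
    by (simp add: N replicate_append_same)
  ultimately show ?thesis
    using poly_fun_foldr_applyB_snoc[where ws = ws0 and us = us and ds = "replicate (length ws0) True"]
      assms(1) N
    by (simp add: Z_def)
qed

section \<open>The special point\<close>

lemma Mono_vacuum_0_1:
  "Mono (t,a,b,c,d,e,f) u ws ds (replicate (length ws) False) False True = 0"
proof (induction ws arbitrary: ds)
  case Nil
  then show ?case by (cases ds) auto
next
  case (Cons w ws)
  then show ?case by (cases ds) (auto simp: UNIV_bool)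
qed

lemma Mono_vacuum_1_1:
  "Mono (t,a,b,c,d,e,f) u ws ds (replicate (length ws) False) True True
     = (if ds = replicate (length ws) False then (\<Prod>w\<leftarrow>ws. e*u + f*w) else 0)"
proof (induction ws arbitrary: ds)
  case Nil
  then show ?case by (cases ds) auto
next
  case (Cons w ws)
  then show ?case by (cases ds) (auto simp: UNIV_bool Mono_vacuum_0_1)
qed

lemma applyB_Omega:
  assumes "length ws = n"
  shows "applyB p ws u (Omega n) ds = Bel p u ws ds (replicate n False)"
proof -
  have "applyB p ws u (Omega n) ds
      = (\<Sum>bs\<in>{bs. length bs = n}. if bs = replicate n False then Bel p u ws ds bs else 0)"
    unfolding applyB_def Omega_def assms by (intro sum.cong) auto
  then show ?thesis
    by (simp add: finite_lists_length)
qed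

lemma applyB_Omega_at_root:
  assumes "a*u + b*x = 0"
  shows "applyB (t,a,b,c,d,e,f) (ws @ [x]) u (Omega (Suc (length ws))) (ds @ [q])
       = (if q then (1-t)*c*u * (\<Prod>w\<leftarrow>ws. e*u + f*w) * Omega (length ws) ds else 0)"
proof -
  have "replicate (Suc (length ws)) False = replicate (length ws) False @ [False]"
    by (simp add: replicate_append_same)
  then have "applyB (t,a,b,c,d,e,f) (ws @ [x]) u (Omega (Suc (length ws))) (ds @ [q])
      = Bel (t,a,b,c,d,e,f) u (ws @ [x]) (ds @ [q]) (replicate (length ws) False @ [False])"
    by (metis applyB_Omega length_append_singleton)
  then show ?thesis
    using assms by (simp add: Bel_snoc_False Mono_vacuum_1_1 Omega_def)
qed

lemma applyB_cmult: "applyB p ws u (\<lambda>bs. k * X bs) = (\<lambda>ds. k * applyB p ws u X ds)"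
  unfolding applyB_def by (simp add: sum_distrib_left mult_ac)

lemma foldr_applyB_cmult: "foldr (applyB p ws) us (\<lambda>bs. k * X bs) = (\<lambda>ds. k * foldr (applyB p ws) us X ds)"
  by (induction us) (simp_all add: applyB_cmult)

lemma applyB_last_site_occupied:
  assumes "\<And>ds. X (ds @ [False]) = 0"
  shows "applyB (t,a,b,c,d,e,f) (ws @ [x]) u X (ds @ [True])
           = (a*t*u + b*x) * applyB (t,a,b,c,d,e,f) ws u (\<lambda>bs. X (bs @ [True])) ds"
    and "applyB (t,a,b,c,d,e,f) (ws @ [x]) u X (ds @ [False]) = 0"
  using assms
  by (simp_all add: applyB_def sum_lists_length_Suc_snoc UNIV_bool Bel_snoc_True sum_distrib_left mult.assoc)

lemma foldr_applyB_last_site_occupied: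
  assumes "\<And>ds. X (ds @ [False]) = 0"
  shows "foldr (applyB (t,a,b,c,d,e,f) (ws @ [x])) us X (ds @ [True])
           = (\<Prod>v\<leftarrow>us. a*t*v + b*x) * foldr (applyB (t,a,b,c,d,e,f) ws) us (\<lambda>bs. X (bs @ [True])) ds
       \<and> foldr (applyB (t,a,b,c,d,e,f) (ws @ [x])) us X (ds @ [False]) = 0"
proof (induction us arbitrary: ds)
  case Nil
  then show ?case using assms by simp
next
  case (Cons v us)
  then show ?case
    by (simp add: applyB_last_site_occupied applyB_cmult mult.assoc)
qed

lemma Z_snoc_at_root:
  assumes "a*u + b*x = 0"
  shows "Z (t,a,b,c,d,e,f) (us @ [u]) (ws @ [x])
       = (1-t)*c*u * (\<Prod>w\<leftarrow>ws. e*u + f*w) * (\<Prod>v\<leftarrow>us. a*t*v + b*x) * Z (t,a,b,c,d,e,f) us ws"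
proof -
  let ?p = "(t,a,b,c,d,e,f)"
  let ?X = "applyB ?p (ws @ [x]) u (Omega (Suc (length ws)))"
  have replicate_snoc: "replicate (Suc n) y = replicate n y @ [y]" for n and y :: bool
    by (simp add: replicate_append_same)
  have X_True: "?X (bs @ [True]) = (1-t)*c*u * (\<Prod>w\<leftarrow>ws. e*u + f*w) * Omega (length ws) bs"
    and X_False: "?X (bs @ [False]) = 0" for bs
    using applyB_Omega_at_root[OF assms] by simp_all
  have "Z ?p (us @ [u]) (ws @ [x]) = foldr (applyB ?p (ws @ [x])) us ?X (replicate (length ws) True @ [True])"
    unfolding Z_def length_append_singleton replicate_snoc foldr_append by simp
  also have "\<dots> = (\<Prod>v\<leftarrow>us. a*t*v + b*x)
                   * foldr (applyB ?p ws) us (\<lambda>bs. ?X (bs @ [True])) (replicate (length ws) True)"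
    by (rule foldr_applyB_last_site_occupied[THEN conjunct1]) (rule X_False)
  also have "\<dots> = (1-t)*c*u * (\<Prod>w\<leftarrow>ws. e*u + f*w) * (\<Prod>v\<leftarrow>us. a*t*v + b*x) * Z ?p us ws"
    unfolding X_True foldr_applyB_cmult Z_def by (simp add: mult_ac)
  finally show ?thesis .
qed

lemma prod_list_remove_nth:
  fixes g :: "'a \<Rightarrow> 'b::comm_monoid_mult"
  assumes "k < length xs"
  shows "(\<Prod>x\<leftarrow>take k xs @ drop (Suc k) xs. g x) = (\<Prod>j\<in>{0..<length xs} - {k}. g (xs ! j))"
proof -
  let ?skip = "\<lambda>j. if j < k then j else Suc j"
  have "map g (take k xs @ drop (Suc k) xs) ! j = g (xs ! ?skip j)" if "j < length xs - 1" for j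
    using that assms by (auto simp: nth_append)
  then have "(\<Prod>x\<leftarrow>take k xs @ drop (Suc k) xs. g x) = (\<Prod>j\<in>{0..<length xs - 1}. g (xs ! ?skip j))"
    unfolding prod.list_conv_set_nth using assms by (intro prod.cong) (auto simp del: map_append)
  also have "\<dots> = (\<Prod>j\<in>{0..<length xs} - {k}. g (xs ! j))"
    using assms
    by (intro prod.reindex_bij_betw bij_betw_byWitness[where f'="\<lambda>j. if j < k then j else j - 1"])
       (auto simp: image_def)
  finally show ?thesis .
qed

lemma list_update_last: "length xs = Suc n \<Longrightarrow> xs[n := x] = take n xs @ [x]"
  by (induction xs arbitrary: n) (auto split: nat.split)

lemma Z_at_special_point:
  assumes "c*d + a*f = 0" "t*c*d + b*e = 0" "b \<noteq> 0"
    and "k < N" "length us = N" "length ws = N"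
  shows "Z (t,a,b,c,d,e,f) us (ws[N-1 := -a*us!k/b])
       = (1-t)*c*a^(N-1)*us!k * (\<Prod>j\<in>{0..<N}-{k}. t*us!j - us!k) * (\<Prod>j<N-1. e*us!k + f*ws!j)
         * Z (t,a,b,c,d,e,f) (take k us @ drop (Suc k) us) (take (N-1) ws)"
proof -
  let ?p = "(t,a,b,c,d,e,f)"
  define u x us' ws' where "u = us!k" and "x = -a*us!k/b"
    and "us' = take k us @ drop (Suc k) us" and "ws' = take (N-1) ws"
  have bx: "b*x = -(a*u)"
    using assms(3) by (simp add: x_def u_def)
  have ws: "ws[N-1 := x] = ws' @ [x]"
    unfolding ws'_def using assms(4,6) by (intro list_update_last) simp
  have "mset us = mset (take k us @ us!k # drop (Suc k) us)"
    using assms(4,5) by (metis id_take_nth_drop)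
  also have "\<dots> = mset (us' @ [u])"
    by (simp add: us'_def u_def)
  finally have "Z ?p us (ws[N-1 := x]) = Z ?p (us' @ [u]) (ws' @ [x])"
    unfolding ws by (rule Z_mset_eq[OF assms(1,2)])
  also have "\<dots> = (1-t)*c*u * (\<Prod>w\<leftarrow>ws'. e*u + f*w) * (\<Prod>v\<leftarrow>us'. a*t*v + b*x) * Z ?p us' ws'"
    using bx by (simp add: Z_snoc_at_root)
  finally have Z: "Z ?p us (ws[N-1 := x]) = \<dots>" .
  have "(\<Prod>v\<leftarrow>us'. a*t*v + b*x) = (\<Prod>j\<in>{0..<N}-{k}. a*t*us!j + b*x)"
    unfolding us'_def using assms(4,5) prod_list_remove_nth[of k us "\<lambda>v. a*t*v + b*x"] by simp
  also have "\<dots> = (\<Prod>j\<in>{0..<N}-{k}. a * (t*us!j - u))"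
    by (simp add: bx algebra_simps)
  also have "\<dots> = a^(N-1) * (\<Prod>j\<in>{0..<N}-{k}. t*us!j - u)"
    using assms(4) by (simp add: prod.distrib)
  finally have us': "(\<Prod>v\<leftarrow>us'. a*t*v + b*x) = \<dots>" .
  have ws': "(\<Prod>w\<leftarrow>ws'. e*u + f*w) = (\<Prod>j<N-1. e*u + f*ws!j)"
    using assms(6) by (simp add: ws'_def prod.list_conv_set_nth atLeast0LessThan)
  show ?thesis
    using Z unfolding us' ws' by (simp add: u_def x_def us'_def ws'_def mult_ac)
qed

lemma Z_single: "Z (t,a,b,c,d,e,f) [u] [w] = (1-t)*c*u"
proof -
  have "{bs::bool list. length bs = 0} = {[]}" by auto
  then show ?thesis
    by (simp add: Z_def applyB_def Omega_def Bel_def UNIV_bool sum_lists_length_Suc)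
qed

theorem mainTheorem6:
  fixes t a b c d e f :: complex and N :: nat and us ws :: "complex list"
  assumes "t \<noteq> 0" "a \<noteq> 0" "b \<noteq> 0" "c \<noteq> 0" "d \<noteq> 0" "e \<noteq> 0" "f \<noteq> 0"
    and "t \<noteq> 1" and "c*d + a*f = 0" and "t*c*d + b*e = 0"
    and "N \<ge> 1" and "length us = N" and "length ws = N"
  shows "(\<exists>q :: complex poly. degree q \<le> N - 1 \<and>
            (\<forall>x. Z (t,a,b,c,d,e,f) us (ws[N-1 := x]) = poly q x))
       \<and> (\<forall>vs. mset vs = mset us \<longrightarrow> Z (t,a,b,c,d,e,f) vs ws = Z (t,a,b,c,d,e,f) us ws)
       \<and> (\<forall>u1 w1. Z (t,a,b,c,d,e,f) [u1] [w1] = (1-t)*c*u1)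
       \<and> (N \<ge> 2 \<longrightarrow> (\<forall>k<N.
            Z (t,a,b,c,d,e,f) us (ws[N-1 := -a*us!k/b])
            = (1-t)*c*a^(N-1)*us!k
              * (\<Prod>j\<in>{0..<N}-{k}. t*us!j - us!k)
              * (\<Prod>j<N-1. e*us!k + f*ws!j)
              * Z (t,a,b,c,d,e,f) (take k us @ drop (Suc k) us) (take (N-1) ws)))"
proof (intro conjI allI impI)
  show "\<exists>q :: complex poly. degree q \<le> N - 1 \<and> (\<forall>x. Z (t,a,b,c,d,e,f) us (ws[N-1 := x]) = poly q x)"
    using Z_poly_fun_last[OF assms(12,13,11)] unfolding poly_fun_degree_le_def .
next
  fix vs :: "complex list"
  assume "mset vs = mset us"
  then show "Z (t,a,b,c,d,e,f) vs ws = Z (t,a,b,c,d,e,f) us ws"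
    by (rule Z_mset_eq[OF assms(9,10)])
next
  fix u1 w1
  show "Z (t,a,b,c,d,e,f) [u1] [w1] = (1-t)*c*u1"
    by (rule Z_single)
next
  fix k
  assume "N \<ge> 2" "k < N"
  then show "Z (t,a,b,c,d,e,f) us (ws[N-1 := -a*us!k/b])
      = (1-t)*c*a^(N-1)*us!k * (\<Prod>j\<in>{0..<N}-{k}. t*us!j - us!k) * (\<Prod>j<N-1. e*us!k + f*ws!j)
        * Z (t,a,b,c,d,e,f) (take k us @ drop (Suc k) us) (take (N-1) ws)"
    using Z_at_special_point[OF assms(9,10,3) _ assms(12,13)] by blast
qed

end
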